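(* Let $n\ge2$. (i) Let $P$ be an invertible $n\times n$ matrix over $\mathbb{F}_{q^2}$, $A=P(E_{11}+\cdots+E_{n-1,n-1})P^\ast$, and $\mathbf{x}=P(y_1,\ldots,y_n)^\top$ with $y_n\neq 0$, so that $\mathcal{L}=\{A+\lambda\mathbf{x}\mathbf{x}^\ast: 0\neq\lambda\in\mathbb{F}_q\}$ is a leaf of $A$. Put $\mathbf{z}:=\big(-y_1/y_n,\ldots,-y_{n-1}/y_n\big)^\top$. Then for every nonzero $\lambda\in\mathbb{F}_q$, $$(A+\lambda\mathbf{x}\mathbf{x}^\ast)^{-1}=(P^{-1})^\ast\begin{bmatrix}I_{n-1}&\mathbf{z}\\ \mathbf{z}^\ast&\mathbf{z}^\ast\mathbf{z}+(\lambda y_n\bar y_n)^{-1}\end{bmatrix}P^{-1}.$$ If moreover $q\ge 3$, then $\mathcal{L}^{-1}:=\{(A+\lambda\mathbf{x}\mathbf{x}^\ast)^{-1}: 0\neq\lambda\in\mathbb{F}_q\}$ is the leaf of the matrix $N=(P^{-1})^\ast\begin{bmatrix}I_{n-1}&\mathbf{z}\\ \mathbf{z}^\ast&\mathbf{z}^\ast\mathbf{z}\end{bmatrix}P^{-1}$ generated by the vector $\mathbf{v}=(P^{-1})^\ast\mathbf{e}_n$, i.e. $\mathcal{L}^{-1}=\{N+\mu\mathbf{v}\mathbf{v}^\ast: 0\ne\mu\in\mathbb{F}_q\}$, where $\mathbf{e}_n=(0,\ldots,0,1)^\top$. (ii) Let $D$ be an invertible $(n-1)\times(n-1)$ hermitian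 matrix, $\mathbf{w}\in\mathbb{F}_{q^2}^{n-1}$ and $\mu\in\mathbb{F}_q$. Then $\begin{bmatrix}\mu&\mathbf{w}^\ast\\ \mathbf{w}&D\end{bmatrix}$ is invertible if and only if $\mu\neq\mathbf{w}^\ast D^{-1}\mathbf{w}$, in which case $$\begin{bmatrix}\mu&\mathbf{w}^\ast\\ \mathbf{w}&D\end{bmatrix}^{-1}=\begin{bmatrix}0&0\\0&D^{-1}\end{bmatrix}+\frac{1}{\mu-\mathbf{w}^\ast D^{-1}\mathbf{w}}\begin{bmatrix}-1\\ D^{-1}\mathbf{w}\end{bmatrix}\begin{bmatrix}-1\\ D^{-1}\mathbf{w}\end{bmatrix}^\ast.$$
   Context: $\mathbb{F}_{q^2}$ is the field with $q^2$ elements with involution $\bar x=x^q$, fixed field $\mathbb{F}_q$; $X^\ast=\bar X^\top$; hermitian means $A^\ast=A$. $E_{ii}$ is the matrix unit with $1$ in position $(i,i)$. Leaf: if $A$ is an $n\times n$ hermitian matrix of rank $s<n$ and $\mathbf{x}$ is not in the column space of $A$, then $\{A+\lambda\mathbf{x}\mathbf{x}^\ast: 0\ne\lambda\in\mathbb{F}_q\}$ is the leaf of $A$ generated by $\mathbf{x}$. *)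

theory Defs
  imports "Jordan_Normal_Form.Matrix" "Jordan_Normal_Form.DL_Rank"
begin

text \<open>The field F_{q^2} is a finite field type 'a with CARD('a) = q^2.
  Involution: bar x = x^q.  Vectors are represented as column matrices (k x 1).\<close>

definition hconj :: "nat \<Rightarrow> 'a::field \<Rightarrow> 'a" where
  "hconj q x = x ^ q"

definition Fq :: "nat \<Rightarrow> 'a::field set" where
  "Fq q = {x. hconj q x = x}"

definition mstar :: "nat \<Rightarrow> 'a::field mat \<Rightarrow> 'a mat" where
  "mstar q X = transpose_mat (map_mat (hconj q) X)"

definition hermitian :: "nat \<Rightarrow> 'a::field mat \<Rightarrow> bool" where
  "hermitian q A \<longleftrightarrow> mstar q A = A"

text \<open>Matrix inverse (meaningful for invertible square matrices).\<close>
definition minv :: "'a::field mat \<Rightarrow> 'a mat" where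
  "minv A = (SOME B. inverts_mat A B \<and> inverts_mat B A)"

definition leaf :: "nat \<Rightarrow> 'a::field mat \<Rightarrow> 'a mat \<Rightarrow> 'a mat set" where
  "leaf q A x = {A + lam \<cdot>\<^sub>m (x * mstar q x) | lam. lam \<in> Fq q \<and> lam \<noteq> 0}"

definition is_leaf :: "nat \<Rightarrow> nat \<Rightarrow> 'a::field mat \<Rightarrow> 'a mat \<Rightarrow> 'a mat set \<Rightarrow> bool" where
  "is_leaf q n A x L \<longleftrightarrow>
     A \<in> carrier_mat n n \<and> hermitian q A \<and> vec_space.rank n A < n \<and>
     x \<in> carrier_mat n 1 \<and> \<not> (\<exists>c \<in> carrier_mat n 1. A * c = x) \<and>
     L = leaf q A x"

end

theory Submission
  imports Defs "HOL-Algebra.Sylow" "HOL-Algebra.Multiplicative_Group"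
    "HOL-Computational_Algebra.Primes"
begin

(* Since the field has q^2 elements, q is a power of the characteristic, so x |-> x^q is an
   involutive field automorphism and X^* behaves like the usual conjugate transpose.

   (i) A + lam x x^* = P (E + lam Y Y^* ) P^* with E = diag(1,...,1,0). Put u = (z; -1), so that
   Y = -y_n u, and K_c = [I z; z^* z^*z + c]. The vector u spans the kernel of N = K_0, hence
   u^* K_c = -c e_n^*, and this gives (E + lam Y Y^* ) K_c = I for c = (lam y_n conj(y_n))^-1.
   As K_c = N + c e_n e_n^* and c runs through F_q^* together with lam, the inverses form the
   leaf of N generated by e_n, transported by the congruence X |-> (P^-1)^* X P^-1. The leaf
   conditions for N also come from u: N u = 0 while u^* e_n = -1.

   (ii) M (-1; D^-1 w) = (s - mu; 0) with s = w^* D^-1 w. This makes M singular when mu = s;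
   otherwise multiplying out the blocks verifies the stated inverse. *)

lemma of_nat_prime_dvd_card_eq_0:
  assumes r: "prime r" and r_dvd: "r dvd card (UNIV :: 'a::{field,finite} set)"
  shows "of_nat r = (0::'a)"
proof -
  define G where "G = \<lparr>carrier = (UNIV :: 'a set), monoid.mult = (+), one = (0::'a)\<rparr>"
  interpret G: group G
    unfolding G_def by (rule groupI) (auto simp: add.assoc intro: exI[of _ "- _"])
  have G_pow: "x [^]\<^bsub>G\<^esub> k = of_nat k * x" for x :: 'a and k :: nat
    by (induction k) (auto simp: G_def distrib_right)
  \<comment> \<open>Cauchy's theorem for the additive group, via Sylow\<close>
  obtain c where "Coset.order G = r ^ 1 * c"
    using r_dvd unfolding Coset.order_def G_def by auto
  from sylow_thm[OF r G.is_group this] obtain H where H: "subgroup H G" "card H = r"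
    by (auto simp: G_def)
  then have "\<not> H \<subseteq> {0}"
    using prime_gt_1_nat[OF r] card_mono[of "{0}" H] by auto
  then obtain h where h: "h \<in> H" "h \<noteq> 0" by auto
  interpret H: group "G\<lparr>carrier := H\<rparr>" by (rule G.subgroup_imp_group[OF H(1)])
  have "h [^]\<^bsub>G\<lparr>carrier := H\<rparr>\<^esub> Coset.order (G\<lparr>carrier := H\<rparr>) = \<one>\<^bsub>G\<lparr>carrier := H\<rparr>\<^esub>"
    using h by (intro H.pow_order_eq_1) simp
  then have "of_nat r * h = 0"
    using H by (simp add: Coset.order_def nat_pow_def G_pow[unfolded nat_pow_def]) (simp add: G_def)
  with h show ?thesis by simp
qed

lemma power_of_CHAR_if_card_square:
  assumes "card (UNIV :: 'a::{field,finite} set) = q ^ 2"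
  shows "\<exists>k. q = CHAR('a) ^ k"
proof -
  have "q \<noteq> 0" using assms finite_UNIV_card_ge_0[where 'a='a] by auto
  have char_prime: "prime CHAR('a)" by (simp add: prime_CHAR_semidom finite_imp_CHAR_pos)
  have factors: "prime_factors q \<subseteq> {CHAR('a)}"
  proof
    fix r assume "r \<in> prime_factors q"
    then have "prime r" "r dvd card (UNIV :: 'a set)"
      using assms by (auto simp: in_prime_factors_iff power2_eq_square)
    then have "CHAR('a) dvd r"
      using of_nat_prime_dvd_card_eq_0 of_nat_eq_0_iff_char_dvd by blast
    with \<open>prime r\<close> show "r \<in> {CHAR('a)}"
      using char_prime by (auto dest: primes_dvd_imp_eq)
  qed
  have "q = (\<Prod>r \<in> prime_factors q. r ^ multiplicity r q)"
    using prod_prime_factors[OF \<open>q \<noteq> 0\<close>] by simp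
  also have "\<dots> = (\<Prod>r \<in> {CHAR('a)}. r ^ multiplicity r q)"
    using factors by (intro prod.mono_neutral_left)
      (auto simp: in_prime_factors_iff not_dvd_imp_multiplicity_0 \<open>q \<noteq> 0\<close> char_prime)
  finally show ?thesis by auto
qed

lemma power_card_eq_self:
  fixes x :: "'a::{field,finite}"
  shows "x ^ card (UNIV :: 'a set) = x"
proof (cases "x = 0")
  case False
  let ?U = "UNIV - {0 :: 'a}"
  have "(*) x ` ?U = ?U"
  proof
    show "?U \<subseteq> (*) x ` ?U"
    proof
      fix y assume "y \<in> ?U"
      then show "y \<in> (*) x ` ?U"
        using False by (intro image_eqI[of _ _ "y / x"]) auto
    qed
  qed (use False in auto)
  then have "(\<Prod>y\<in>?U. y) = (\<Prod>y\<in>(*) x ` ?U. y)" by simp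
  also have "\<dots> = (\<Prod>y\<in>?U. x * y)"
    using False by (simp add: prod.reindex inj_on_def)
  also have "\<dots> = x ^ card ?U * (\<Prod>y\<in>?U. y)"
    by (simp add: prod.distrib)
  finally have "x ^ card ?U = 1"
    by simp
  moreover have "Suc (card ?U) = card (UNIV :: 'a set)"
    by (rule card_Suc_Diff1) simp_all
  ultimately show ?thesis
    by (metis power_Suc mult.right_neutral)
qed (simp add: finite_UNIV_card_ge_0)

lemma carrier_mat_if_inverts_mat:
  assumes A: "A \<in> carrier_mat n n" and "inverts_mat A B" and "inverts_mat B A"
  shows "B \<in> carrier_mat n n"
proof -
  have AB: "A * B = 1\<^sub>m n" and BA: "B * A = 1\<^sub>m (dim_row B)"
    using assms by (auto simp: inverts_mat_def)
  have "dim_col B = n" using arg_cong[OF AB, of dim_col] by simp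
  moreover have "dim_row B = n" using arg_cong[OF BA, of dim_col] A by simp
  ultimately show ?thesis by (intro carrier_matI)
qed

lemma minv_eqI:
  assumes A: "A \<in> carrier_mat n n" and B: "B \<in> carrier_mat n n" and AB: "A * B = 1\<^sub>m n"
  shows "minv A = (B :: 'a::field mat)"
  unfolding minv_def
proof (rule some_equality)
  have "B * A = 1\<^sub>m n" by (rule mat_mult_left_right_inverse[OF A B AB])
  then show "inverts_mat A B \<and> inverts_mat B A"
    using A B AB by (simp add: inverts_mat_def)
next
  fix B' assume inv: "inverts_mat A B' \<and> inverts_mat B' A"
  then have B': "B' \<in> carrier_mat n n"
    using carrier_mat_if_inverts_mat[OF A] by blast
  with inv A have "B' * A = 1\<^sub>m n" by (simp add: inverts_mat_def)
  then have "B' * (A * B) = B"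
    using A B B' by (simp flip: assoc_mult_mat)
  with AB B' show "B' = B" by simp
qed

lemma minv_inverts_mat:
  assumes A: "A \<in> carrier_mat n n" and "invertible_mat (A :: 'a::field mat)"
  shows "minv A \<in> carrier_mat n n" "A * minv A = 1\<^sub>m n" "minv A * A = 1\<^sub>m n"
proof -
  obtain B where inv: "inverts_mat A B" "inverts_mat B A"
    using assms unfolding invertible_mat_def by blast
  then have B: "B \<in> carrier_mat n n" by (rule carrier_mat_if_inverts_mat[OF A])
  with inv A have AB: "A * B = 1\<^sub>m n" by (simp add: inverts_mat_def)
  with A B have "minv A = B" by (rule minv_eqI)
  with A B AB show "minv A \<in> carrier_mat n n" "A * minv A = 1\<^sub>m n" "minv A * A = 1\<^sub>m n"
    using mat_mult_left_right_inverse[OF A B AB] by simp_all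
qed

lemma invertible_matI:
  assumes A: "A \<in> carrier_mat n n" and B: "B \<in> carrier_mat n n" and AB: "A * B = 1\<^sub>m n"
  shows "invertible_mat (A :: 'a::field mat)"
proof -
  have "B * A = 1\<^sub>m n" by (rule mat_mult_left_right_inverse[OF A B AB])
  with A B AB show ?thesis
    unfolding invertible_mat_def inverts_mat_def by (intro conjI exI[of _ B]) simp_all
qed

lemma det_eq_0_if_mult_col_eq_0:
  assumes A: "A \<in> carrier_mat n n" and u: "u \<in> carrier_mat n 1"
    and Au: "A * u = 0\<^sub>m n 1" and u0: "u \<noteq> 0\<^sub>m n 1"
  shows "det (A :: 'a::field mat) = 0"
proof -
  have "A *\<^sub>v col u 0 = col (A * u) 0"
    by (rule col_mult2[OF A u, symmetric]) simp
  then have kernel: "A *\<^sub>v col u 0 = 0\<^sub>v n"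
    by (simp add: Au)
  have "col u 0 \<noteq> 0\<^sub>v n"
  proof
    assume col0: "col u 0 = 0\<^sub>v n"
    have "u $$ (i, 0) = 0" if "i < n" for i
      using that u arg_cong[OF col0, of "\<lambda>v. v $ i"] by simp
    then have "u = 0\<^sub>m n 1"
      using u by (intro eq_matI) auto
    with u0 show False ..
  qed
  moreover have "col u 0 \<in> carrier_vec n"
    using carrier_matD(1)[OF u] by (intro carrier_vecI) simp
  ultimately show ?thesis
    using kernel by (intro det_0_iff_vec_prod_zero_field[OF A, THEN iffD2] exI[of _ "col u 0"] conjI)
qed

lemma det_neq_0_if_invertible:
  assumes "A \<in> carrier_mat n n" and "invertible_mat (A :: 'a::field mat)"
  shows "det A \<noteq> 0"
proof -
  note inv = minv_inverts_mat[OF assms]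
  have "det (minv A) * det A = 1"
    using det_mult[OF inv(1) assms(1)] inv(3) by simp
  then show ?thesis by auto
qed

lemma rank_less_iff_det_eq_0:
  assumes "A \<in> carrier_mat n n"
  shows "vec_space.rank n A < n \<longleftrightarrow> det (A :: 'a::field mat) = 0"
  using vec_space.det_rank_iff[OF assms] vec_space.rank_le_nc[OF assms]
  by (cases "det A = 0") auto

lemma mstar_dim [simp]: "dim_row (mstar q A) = dim_col A" "dim_col (mstar q A) = dim_row A"
  by (simp_all add: mstar_def)

lemma mstar_carrier_mat [simp]: "A \<in> carrier_mat m n \<Longrightarrow> mstar q A \<in> carrier_mat n m"
  by (metis carrier_matD carrier_matI mstar_dim)

lemma index_mstar [simp]:
  "i < dim_col A \<Longrightarrow> j < dim_row A \<Longrightarrow> mstar q A $$ (i, j) = hconj q (A $$ (j, i))"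
  by (simp add: mstar_def)

lemma smult_smult_mat: "a \<cdot>\<^sub>m (b \<cdot>\<^sub>m A) = (a * b :: 'b::semigroup_mult) \<cdot>\<^sub>m A"
  by (rule eq_matI) (simp_all add: mult.assoc)

lemma bordered_mult_col:
  fixes r w D v :: "'a::field mat" and mu :: 'a
  assumes r: "r \<in> carrier_mat 1 m" and w: "w \<in> carrier_mat m 1" and D: "D \<in> carrier_mat m m"
    and v: "v \<in> carrier_mat m 1"
  shows "four_block_mat (mat 1 1 (\<lambda>_. mu)) r w D * (mat 1 1 (\<lambda>_. - 1) @\<^sub>r v) =
    mat 1 1 (\<lambda>_. (r * v) $$ (0, 0) - mu) @\<^sub>r (D * v - w)"
proof -
  have "mat 1 1 (\<lambda>_. - 1) @\<^sub>r v = four_block_mat (mat 1 1 (\<lambda>_. - 1)) (0\<^sub>m 1 0) v (0\<^sub>m m 0)"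
    "mat 1 1 (\<lambda>_. (r * v) $$ (0, 0) - mu) @\<^sub>r (D * v - w) =
       four_block_mat (mat 1 1 (\<lambda>_. (r * v) $$ (0, 0) - mu)) (0\<^sub>m 1 0) (D * v - w) (0\<^sub>m m 0)"
    using v D w by (simp_all add: append_rows_def)
  then show ?thesis
    using r w D v
    by (simp only:) (subst mult_four_block_mat[OF _ r w D _ zero_carrier_mat v zero_carrier_mat];
        auto intro!: cong_four_block_mat simp: scalar_prod_def)
qed

lemma bordered_mult_kernel_col:
  fixes r w D :: "'a::field mat" and mu :: 'a
  assumes r: "r \<in> carrier_mat 1 m" and w: "w \<in> carrier_mat m 1"
    and D: "D \<in> carrier_mat m m" "invertible_mat D"
  shows "four_block_mat (mat 1 1 (\<lambda>_. mu)) r w D * (mat 1 1 (\<lambda>_. - 1) @\<^sub>r (minv D * w)) =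
    mat 1 1 (\<lambda>_. (r * minv D * w) $$ (0, 0) - mu) @\<^sub>r 0\<^sub>m m 1"
proof -
  note Di = minv_inverts_mat[OF D]
  have "D * (minv D * w) - w = 0\<^sub>m m 1"
    using assoc_mult_mat[OF D(1) Di(1) w] Di(2) w by simp
  with bordered_mult_col[OF r w D(1) mult_carrier_mat[OF Di(1) w]] show ?thesis
    using assoc_mult_mat[OF r Di(1) w] by simp
qed

lemma bordered_mult_block_diag:
  fixes r w D E :: "'a::field mat" and mu :: 'a
  assumes r: "r \<in> carrier_mat 1 m" and w: "w \<in> carrier_mat m 1" and D: "D \<in> carrier_mat m m"
    and E: "E \<in> carrier_mat m m"
  shows "four_block_mat (mat 1 1 (\<lambda>_. mu)) r w D * four_block_mat (0\<^sub>m 1 1) (0\<^sub>m 1 m) (0\<^sub>m m 1) E =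
    four_block_mat (0\<^sub>m 1 1) (r * E) (0\<^sub>m m 1) (D * E)"
  using r w D E
  by (subst mult_four_block_mat[OF _ r w D zero_carrier_mat zero_carrier_mat zero_carrier_mat E])
    (auto intro!: cong_four_block_mat simp: scalar_prod_def)

context
  fixes q :: nat
  assumes card_UNIV: "card (UNIV :: 'a::{field,finite} set) = q ^ 2"
begin

lemma hconj_0 [simp]: "hconj q (0 :: 'a) = 0"
  using card_UNIV finite_UNIV_card_ge_0[where 'a='a] by (cases q) (auto simp: hconj_def)

lemma hconj_1 [simp]: "hconj q (1 :: 'a) = 1"
  by (simp add: hconj_def)

lemma hconj_add: "hconj q (x + y :: 'a) = hconj q x + hconj q y"
proof -
  obtain k where "q = CHAR('a) ^ k"
    using power_of_CHAR_if_card_square[OF card_UNIV] by blast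
  then show ?thesis
    unfolding hconj_def by (rule freshmans_dream'[rotated]) (simp add: prime_CHAR_semidom finite_imp_CHAR_pos)
qed

lemma hconj_mult: "hconj q (x * y :: 'a) = hconj q x * hconj q y"
  by (simp add: hconj_def power_mult_distrib)

lemma hconj_uminus: "hconj q (- x :: 'a) = - hconj q x"
  using hconj_add[of "- x" x] by (simp add: eq_neg_iff_add_eq_0)

lemma hconj_inverse: "hconj q (inverse x :: 'a) = inverse (hconj q x)"
  by (simp add: hconj_def power_inverse)

lemma hconj_sum: "hconj q (sum f A :: 'a) = (\<Sum>i\<in>A. hconj q (f i))"
  by (induction A rule: infinite_finite_induct) (simp_all add: hconj_add)

lemma hconj_hconj [simp]: "hconj q (hconj q x) = (x :: 'a)"
  using power_card_eq_self[of x] card_UNIV by (simp add: hconj_def power2_eq_square flip: power_mult)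

lemma hconj_eq_0_iff [simp]: "hconj q x = 0 \<longleftrightarrow> (x :: 'a) = 0"
  by (metis hconj_0 hconj_hconj)

lemma mult_hconj_self_in_Fq: "x * hconj q x \<in> Fq q" for x :: 'a
  by (simp add: Fq_def hconj_mult mult.commute)

lemma Fq_mult_inverse: "x \<in> Fq q \<Longrightarrow> y \<in> Fq q \<Longrightarrow> inverse (x * y :: 'a) \<in> Fq q"
  by (simp add: Fq_def hconj_mult hconj_inverse)

lemma mstar_mstar [simp]: "mstar q (mstar q A) = (A :: 'a mat)"
  by (rule eq_matI) auto

lemma mstar_one [simp]: "mstar q (1\<^sub>m n) = (1\<^sub>m n :: 'a mat)"
  by (rule eq_matI) auto

lemma mstar_zero [simp]: "mstar q (0\<^sub>m m n) = (0\<^sub>m n m :: 'a mat)"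
  by (rule eq_matI) auto

lemma mstar_smult: "mstar q (c \<cdot>\<^sub>m A) = hconj q c \<cdot>\<^sub>m (mstar q A :: 'a mat)"
  by (rule eq_matI) (auto simp: hconj_mult)

lemma mstar_mult:
  assumes "A \<in> carrier_mat m k" "B \<in> carrier_mat k n"
  shows "mstar q (A * B) = mstar q B * (mstar q A :: 'a mat)"
  by (rule eq_matI) (use assms in \<open>auto simp: scalar_prod_def hconj_sum hconj_mult mult.commute\<close>)

lemma mstar_four_block_mat:
  assumes "A \<in> carrier_mat nr1 nc1" "B \<in> carrier_mat nr1 nc2"
    "C \<in> carrier_mat nr2 nc1" "D \<in> carrier_mat nr2 nc2"
  shows "mstar q (four_block_mat A B C D) =
    four_block_mat (mstar q A) (mstar q C) (mstar q B) (mstar q (D :: 'a mat))"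
  by (rule eq_matI) (use assms in auto)

lemma mstar_minv:
  assumes P: "P \<in> carrier_mat n n" and "invertible_mat (P :: 'a mat)"
  shows "mstar q (minv P) * mstar q P = 1\<^sub>m n" "mstar q P * mstar q (minv P) = 1\<^sub>m n"
proof -
  note Q = minv_inverts_mat[OF assms]
  show "mstar q (minv P) * mstar q P = 1\<^sub>m n"
    using mstar_mult[OF P Q(1)] Q(2) by simp
  show "mstar q P * mstar q (minv P) = 1\<^sub>m n"
    using mstar_mult[OF Q(1) P] Q(3) by simp
qed

lemma minv_congruence:
  assumes P: "P \<in> carrier_mat n n" "invertible_mat P"
    and G: "G \<in> carrier_mat n n" and K: "K \<in> carrier_mat n n" and GK: "G * K = 1\<^sub>m n"
  shows "minv (P * G * mstar q P) = mstar q (minv P) * K * (minv P :: 'a mat)"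
proof (rule minv_eqI)
  let ?Q = "minv P"
  note Q = minv_inverts_mat[OF P]
  have closed: "A * B \<in> carrier_mat n n"
    if "A \<in> carrier_mat n n" "B \<in> carrier_mat n n" for A B :: "'a mat"
    using that by (rule mult_carrier_mat)
  have assoc: "A * B * C = A * (B * C)"
    if "A \<in> carrier_mat n n" "B \<in> carrier_mat n n" "C \<in> carrier_mat n n" for A B C :: "'a mat"
    using that by (rule assoc_mult_mat)
  have "P * G * mstar q P * (mstar q ?Q * K * ?Q) = P * (G * ((mstar q P * mstar q ?Q) * (K * ?Q)))"
    using P G K Q(1) by (simp add: assoc closed)
  also have "\<dots> = 1\<^sub>m n"
    using P G K Q by (simp add: mstar_minv[OF P] GK closed flip: assoc)
  finally show "P * G * mstar q P * (mstar q ?Q * K * ?Q) = 1\<^sub>m n" .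
qed (use P G K minv_inverts_mat(1)[OF P] in auto)

lemma congruence_add_rank_one:
  assumes C: "C \<in> carrier_mat n n" and N: "N \<in> carrier_mat n n" and v: "v \<in> carrier_mat n 1"
  shows "C * (N + c \<cdot>\<^sub>m (v * mstar q v)) * mstar q C
    = C * N * mstar q C + c \<cdot>\<^sub>m (C * v * mstar q (C * (v :: 'a mat)))"
proof -
  have C': "mstar q C \<in> carrier_mat n n" and v': "mstar q v \<in> carrier_mat 1 n"
    using C v by simp_all
  have vv: "v * mstar q v \<in> carrier_mat n n" using v by simp
  have "C * (v * mstar q v) * mstar q C = C * (v * (mstar q v * mstar q C))"
    using assoc_mult_mat[OF C vv C'] assoc_mult_mat[OF v v' C'] by simp
  also have "\<dots> = C * v * mstar q (C * v)"
    using assoc_mult_mat[OF C v mult_carrier_mat[OF v' C']] mstar_mult[OF C v] by simp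
  finally show ?thesis
    using mult_add_distrib_mat[OF C N smult_carrier_mat[OF vv]] mult_smult_distrib[OF C vv]
      add_mult_distrib_mat[OF mult_carrier_mat[OF C N] smult_carrier_mat[OF mult_carrier_mat[OF C vv]] C']
      mult_smult_assoc_mat[OF mult_carrier_mat[OF C vv] C']
    by simp
qed

lemma leaf_congruence:
  assumes Q: "Q \<in> carrier_mat n n" and N: "N \<in> carrier_mat n n" and v: "v \<in> carrier_mat n 1"
  shows "leaf q (mstar q Q * N * Q) (mstar q Q * v) = (\<lambda>X. mstar q Q * X * Q) ` leaf q N (v :: 'a mat)"
proof -
  have congruent_member: "mstar q Q * (N + c \<cdot>\<^sub>m (v * mstar q v)) * Q
      = mstar q Q * N * Q + c \<cdot>\<^sub>m (mstar q Q * v * mstar q (mstar q Q * v))" for c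
    using congruence_add_rank_one[OF mstar_carrier_mat[of Q n n q, OF Q] N v] by simp
  show ?thesis
    unfolding leaf_def congruent_member[symmetric] by blast
qed

lemma image_inverse_scaled_Fq:
  assumes a: "a \<in> Fq q" "a \<noteq> 0"
  shows "{f (inverse (lam * a)) | lam. lam \<in> Fq q \<and> lam \<noteq> (0 :: 'a)} = {f mu | mu. mu \<in> Fq q \<and> mu \<noteq> 0}"
proof (intro equalityI subsetI)
  fix X assume "X \<in> {f (inverse (lam * a)) | lam. lam \<in> Fq q \<and> lam \<noteq> 0}"
  with a show "X \<in> {f mu | mu. mu \<in> Fq q \<and> mu \<noteq> 0}"
    using Fq_mult_inverse by auto
next
  fix X assume "X \<in> {f mu | mu. mu \<in> Fq q \<and> mu \<noteq> 0}"
  then obtain mu where mu: "mu \<in> Fq q" "mu \<noteq> 0" and X: "X = f mu" by blast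
  define lam where "lam = inverse (mu * a)"
  have "lam \<in> Fq q" "lam \<noteq> 0" "inverse (lam * a) = mu"
    using Fq_mult_inverse[OF mu(1) a(1)] mu(2) a(2) by (simp_all add: lam_def)
  with X show "X \<in> {f (inverse (lam * a)) | lam. lam \<in> Fq q \<and> lam \<noteq> 0}"
    by auto
qed

lemma is_leaf_congruence:
  assumes Q: "Q \<in> carrier_mat n n" "invertible_mat Q" and leaf: "is_leaf q n N (v :: 'a mat) L"
  shows "is_leaf q n (mstar q Q * N * Q) (mstar q Q * v) ((\<lambda>X. mstar q Q * X * Q) ` L)"
proof -
  from leaf have N: "N \<in> carrier_mat n n" and herm: "mstar q N = N" and rank: "vec_space.rank n N < n"
    and v: "v \<in> carrier_mat n 1" and not_col: "\<not> (\<exists>c \<in> carrier_mat n 1. N * c = v)"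
    and L: "L = leaf q N v"
    unfolding is_leaf_def hermitian_def by blast+
  have Q': "mstar q Q \<in> carrier_mat n n" using Q by simp
  have NQ: "N * Q \<in> carrier_mat n n" using N Q by simp
  have QNQ: "mstar q Q * N * Q = mstar q Q * (N * Q)"
    using assoc_mult_mat[OF Q' N Q(1)] .
  have carrier: "mstar q Q * N * Q \<in> carrier_mat n n" "mstar q Q * v \<in> carrier_mat n 1"
    using Q' NQ v QNQ by (metis mult_carrier_mat)+
  have "mstar q (mstar q Q * N * Q) = mstar q Q * N * Q"
    unfolding QNQ using mstar_mult[OF Q' NQ] mstar_mult[OF N Q(1)] herm QNQ
    by simp
  moreover have "vec_space.rank n (mstar q Q * N * Q) < n"
    unfolding rank_less_iff_det_eq_0[OF carrier(1)]
    using det_mult[OF Q' NQ] det_mult[OF N Q(1)] rank_less_iff_det_eq_0[OF N] rank QNQ by simp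
  moreover have "\<not> (\<exists>c \<in> carrier_mat n 1. mstar q Q * N * Q * c = mstar q Q * v)"
  proof
    assume "\<exists>c \<in> carrier_mat n 1. mstar q Q * N * Q * c = mstar q Q * v"
    then obtain c where c: "c \<in> carrier_mat n 1" and eq: "mstar q Q * (N * (Q * c)) = mstar q Q * v"
      using assoc_mult_mat[OF Q' NQ] assoc_mult_mat[OF N Q(1)] QNQ by auto
    have cancel: "mstar q (minv Q) * (mstar q Q * X) = X" if "X \<in> carrier_mat n 1" for X
      using that assoc_mult_mat[OF mstar_carrier_mat[of "minv Q" n n q] Q' that]
        minv_inverts_mat(1)[OF Q] mstar_minv(1)[OF Q] by simp
    have NQc: "N * (Q * c) \<in> carrier_mat n 1"
      using N Q(1) c by (metis mult_carrier_mat)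
    have "N * (Q * c) = mstar q (minv Q) * (mstar q Q * (N * (Q * c)))"
      by (rule cancel[OF NQc, symmetric])
    also have "\<dots> = v"
      unfolding eq by (rule cancel[OF v])
    finally show False
      using not_col mult_carrier_mat[OF Q(1) c] by blast
  qed
  ultimately show ?thesis
    unfolding is_leaf_def hermitian_def L leaf_congruence[OF Q(1) N v, symmetric]
    using carrier by blast
qed

(* The bordered identity [I z; z^* z^*z] is R^* R for R = [I z]. *)

lemma kernel_bordered_identity:
  fixes z :: "'a mat"
  assumes z: "z \<in> carrier_mat m 1"
  shows "four_block_mat (1\<^sub>m m) z (mstar q z) (mstar q z * z) * (z @\<^sub>r mat 1 1 (\<lambda>_. - 1))
    = 0\<^sub>m (Suc m) 1"
  by (rule eq_matI) (use z in \<open>auto simp: append_rows_def scalar_prod_def sum.atLeast0_lessThan_Suc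
        if_distrib[where f = "\<lambda>x. x * _"] cong: if_cong\<close>)

lemma hermitian_bordered_identity:
  assumes z: "z \<in> carrier_mat m 1"
  shows "mstar q (four_block_mat (1\<^sub>m m) z (mstar q z) (mstar q z * z)) =
    four_block_mat (1\<^sub>m m) z (mstar q z) (mstar q z * (z :: 'a mat))"
  using mstar_four_block_mat[OF one_carrier_mat z mstar_carrier_mat[OF z]
      mult_carrier_mat[OF mstar_carrier_mat[OF z] z]] mstar_mult[OF mstar_carrier_mat[OF z] z]
  by simp

lemma mstar_kernel_mult_last_unit:
  fixes z :: "'a mat"
  assumes z: "z \<in> carrier_mat m 1"
  shows "mstar q (z @\<^sub>r mat 1 1 (\<lambda>_. - 1)) * mat (Suc m) 1 (\<lambda>(i, j). if i = m then 1 else 0)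
    = - 1\<^sub>m 1"
  by (rule eq_matI) (use z in \<open>auto simp: append_rows_def scalar_prod_def sum.atLeast0_lessThan_Suc
        hconj_uminus\<close>)

lemma bordered_identity_add_corner:
  fixes z :: "'a mat"
  assumes z: "z \<in> carrier_mat m 1"
  defines "e \<equiv> mat (Suc m) 1 (\<lambda>(i, j). if i = m then 1 else 0)"
  shows "four_block_mat (1\<^sub>m m) z (mstar q z) (mstar q z * z + c \<cdot>\<^sub>m 1\<^sub>m 1)
    = four_block_mat (1\<^sub>m m) z (mstar q z) (mstar q z * z) + c \<cdot>\<^sub>m (e * mstar q e)"
  by (rule eq_matI) (use z in \<open>auto simp: e_def scalar_prod_def\<close>)

lemma is_leaf_bordered_identity:
  fixes z :: "'a mat"
  assumes z: "z \<in> carrier_mat m 1"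
  defines "N \<equiv> four_block_mat (1\<^sub>m m) z (mstar q z) (mstar q z * z)"
    and "e \<equiv> mat (Suc m) 1 (\<lambda>(i, j). if i = m then 1 else 0)"
  shows "is_leaf q (Suc m) N e (leaf q N e)"
proof -
  define u where "u = z @\<^sub>r mat 1 1 (\<lambda>_. - 1 :: 'a)"
  have N: "N \<in> carrier_mat (Suc m) (Suc m)" and e: "e \<in> carrier_mat (Suc m) 1"
    using z by (auto simp: N_def e_def)
  have u: "u \<in> carrier_mat (Suc m) 1"
    using carrier_append_rows[OF z, of "mat 1 1 (\<lambda>_. - 1)" 1] by (simp add: u_def)
  have Nu: "N * u = 0\<^sub>m (Suc m) 1"
    unfolding N_def u_def by (rule kernel_bordered_identity[OF z])
  have herm: "mstar q N = N"
    unfolding N_def by (rule hermitian_bordered_identity[OF z])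
  have "u $$ (m, 0) = - 1"
    using z by (simp add: u_def append_rows_def)
  then have "u \<noteq> 0\<^sub>m (Suc m) 1" by auto
  with N u Nu have "det N = 0" by (rule det_eq_0_if_mult_col_eq_0)
  have uN: "mstar q u * N = 0\<^sub>m 1 (Suc m)"
    using mstar_mult[OF N u] herm Nu by simp
  have "\<not> (\<exists>d \<in> carrier_mat (Suc m) 1. N * d = e)"
  proof
    assume "\<exists>d \<in> carrier_mat (Suc m) 1. N * d = e"
    then obtain d where d: "d \<in> carrier_mat (Suc m) 1" and Nd: "N * d = e" by blast
    have "mstar q u * e = mstar q u * N * d"
      using assoc_mult_mat[OF mstar_carrier_mat[OF u] N d] Nd by simp
    also have "\<dots> = 0\<^sub>m 1 1"
      using uN d by simp
    finally have "- 1\<^sub>m 1 = (0\<^sub>m 1 1 :: 'a mat)"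
      using mstar_kernel_mult_last_unit[OF z] by (simp add: u_def e_def)
    from arg_cong[OF this, of "\<lambda>M. M $$ (0, 0)"] show False by simp
  qed
  with N e herm \<open>det N = 0\<close> show ?thesis
    unfolding is_leaf_def hermitian_def rank_less_iff_det_eq_0[OF N] by blast
qed

lemma mstar_kernel_mult_bordered_identity_add_corner:
  fixes z :: "'a mat"
  assumes z: "z \<in> carrier_mat m 1"
  defines "e \<equiv> mat (Suc m) 1 (\<lambda>(i, j). if i = m then 1 else 0)"
  shows "mstar q (z @\<^sub>r mat 1 1 (\<lambda>_. - 1)) *
    four_block_mat (1\<^sub>m m) z (mstar q z) (mstar q z * z + c \<cdot>\<^sub>m 1\<^sub>m 1) = (- c) \<cdot>\<^sub>m mstar q e"
proof -
  define N where "N = four_block_mat (1\<^sub>m m) z (mstar q z) (mstar q z * z)"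
  define u where "u = z @\<^sub>r mat 1 1 (\<lambda>_. - 1 :: 'a)"
  have N: "N \<in> carrier_mat (Suc m) (Suc m)" and e: "e \<in> carrier_mat (Suc m) 1"
    using z by (auto simp: N_def e_def)
  have u: "u \<in> carrier_mat (Suc m) 1"
    using carrier_append_rows[OF z, of "mat 1 1 (\<lambda>_. - 1)" 1] by (simp add: u_def)
  have ee: "e * mstar q e \<in> carrier_mat (Suc m) (Suc m)" using e by simp
  have uN: "mstar q u * N = 0\<^sub>m 1 (Suc m)"
    using mstar_mult[OF N u] hermitian_bordered_identity[OF z] kernel_bordered_identity[OF z]
    by (simp add: N_def u_def)
  have "mstar q u * (N + c \<cdot>\<^sub>m (e * mstar q e)) = mstar q u * N + c \<cdot>\<^sub>m (mstar q u * e * mstar q e)"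
    using mult_add_distrib_mat[OF mstar_carrier_mat[OF u] N smult_carrier_mat[OF ee]]
      mult_smult_distrib[OF mstar_carrier_mat[OF u] ee]
      assoc_mult_mat[OF mstar_carrier_mat[OF u] e mstar_carrier_mat[OF e]]
    by simp
  also have "\<dots> = (- c) \<cdot>\<^sub>m mstar q e"
    using uN mstar_kernel_mult_last_unit[OF z] e by (simp add: u_def e_def) (intro eq_matI; simp)
  finally show ?thesis
    unfolding bordered_identity_add_corner[OF z] N_def u_def e_def .
qed

lemma rank_one_update_mult_bordered_identity:
  fixes Y :: "'a mat"
  assumes Y: "Y \<in> carrier_mat (Suc m) 1" and yn: "Y $$ (m, 0) \<noteq> 0" and lam: "lam \<noteq> 0"
  defines "z \<equiv> mat m 1 (\<lambda>(i, j). - Y $$ (i, 0) / Y $$ (m, 0))"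
    and "c \<equiv> inverse (lam * Y $$ (m, 0) * hconj q (Y $$ (m, 0)))"
  shows "(mat (Suc m) (Suc m) (\<lambda>(i, j). if i = j \<and> i < m then 1 else 0) + lam \<cdot>\<^sub>m (Y * mstar q Y)) *
    four_block_mat (1\<^sub>m m) z (mstar q z) (mstar q z * z + c \<cdot>\<^sub>m 1\<^sub>m 1) = 1\<^sub>m (Suc m)"
    (is "(?E + _) * ?K = _")
proof -
  define yn where "yn = Y $$ (m, 0)"
  define e where "e = mat (Suc m) 1 (\<lambda>(i, j). if i = m then 1 else (0 :: 'a))"
  define u where "u = z @\<^sub>r mat 1 1 (\<lambda>_. - 1 :: 'a)"
  have z: "z \<in> carrier_mat m 1" by (simp add: z_def)
  have K: "?K \<in> carrier_mat (Suc m) (Suc m)" and E: "?E \<in> carrier_mat (Suc m) (Suc m)"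
    and e: "e \<in> carrier_mat (Suc m) 1"
    using z by (auto simp: e_def)
  have u: "u \<in> carrier_mat (Suc m) 1"
    using carrier_append_rows[OF z, of "mat 1 1 (\<lambda>_. - 1)" 1] by (simp add: u_def)
  have "Y = (- yn) \<cdot>\<^sub>m u"
    by (rule eq_matI) (use Y yn in \<open>auto simp: u_def z_def yn_def append_rows_def less_Suc_eq\<close>)
  then have "mstar q Y * ?K = (hconj q yn * c) \<cdot>\<^sub>m mstar q e"
    using mstar_kernel_mult_bordered_identity_add_corner[OF z] mult_smult_assoc_mat[OF mstar_carrier_mat[OF u] K]
    by (simp add: u_def e_def mstar_smult hconj_uminus smult_smult_mat)
  moreover have "(?E + lam \<cdot>\<^sub>m (Y * mstar q Y)) * ?K = ?E * ?K + lam \<cdot>\<^sub>m (Y * (mstar q Y * ?K))"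
    using add_mult_distrib_mat[OF E smult_carrier_mat[OF mult_carrier_mat[OF Y mstar_carrier_mat[OF Y]]] K]
      mult_smult_assoc_mat[OF mult_carrier_mat[OF Y mstar_carrier_mat[OF Y]] K]
      assoc_mult_mat[OF Y mstar_carrier_mat[OF Y] K] by simp
  ultimately have "(?E + lam \<cdot>\<^sub>m (Y * mstar q Y)) * ?K
      = ?E * ?K + (lam * (hconj q yn * c)) \<cdot>\<^sub>m (Y * mstar q e)"
    using mult_smult_distrib[OF Y mstar_carrier_mat[OF e]] by (simp add: smult_smult_mat)
  also have "lam * (hconj q yn * c) = inverse yn"
    using lam yn by (simp add: c_def yn_def field_simps)
  also have "?E * ?K + inverse yn \<cdot>\<^sub>m (Y * mstar q e) = 1\<^sub>m (Suc m)"
    by (rule eq_matI) (use Y yn in \<open>auto simp: z_def yn_def e_def scalar_prod_def divide_inverse_commute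
        if_distrib[where f = "\<lambda>x. x * _"] cong: if_cong\<close>)
  finally show ?thesis .
qed

lemma minv_rank_one_update:
  fixes P Y :: "'a mat"
  assumes P: "P \<in> carrier_mat (Suc m) (Suc m)" "invertible_mat P" and Y: "Y \<in> carrier_mat (Suc m) 1"
    and yn: "Y $$ (m, 0) \<noteq> 0" and lam: "lam \<noteq> 0"
  defines "E \<equiv> mat (Suc m) (Suc m) (\<lambda>(i, j). if i = j \<and> i < m then 1 else 0)"
    and "z \<equiv> mat m 1 (\<lambda>(i, j). - Y $$ (i, 0) / Y $$ (m, 0))"
  shows "minv (P * E * mstar q P + lam \<cdot>\<^sub>m (P * Y * mstar q (P * Y))) =
    mstar q (minv P) *
    four_block_mat (1\<^sub>m m) z (mstar q z)
      (mstar q z * z + inverse (lam * Y $$ (m, 0) * hconj q (Y $$ (m, 0))) \<cdot>\<^sub>m 1\<^sub>m 1)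
    * minv P"
proof -
  have E: "E \<in> carrier_mat (Suc m) (Suc m)" by (simp add: E_def)
  have z: "z \<in> carrier_mat m 1" by (simp add: z_def)
  then have K: "four_block_mat (1\<^sub>m m) z (mstar q z) (mstar q z * z + c \<cdot>\<^sub>m 1\<^sub>m 1)
      \<in> carrier_mat (Suc m) (Suc m)" for c :: 'a
    by auto
  have "P * E * mstar q P + lam \<cdot>\<^sub>m (P * Y * mstar q (P * Y)) = P * (E + lam \<cdot>\<^sub>m (Y * mstar q Y)) * mstar q P"
    using congruence_add_rank_one[OF P(1) E Y] by simp
  with minv_congruence[OF P _ K rank_one_update_mult_bordered_identity[OF Y yn lam, folded z_def E_def]] E Y
  show ?thesis by (simp add: E_def z_def)
qed

lemma is_leaf_minv_rank_one_updates:
  fixes P Y :: "'a mat"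
  assumes P: "P \<in> carrier_mat (Suc m) (Suc m)" "invertible_mat P" and Y: "Y \<in> carrier_mat (Suc m) 1"
    and yn: "Y $$ (m, 0) \<noteq> 0"
  defines "E \<equiv> mat (Suc m) (Suc m) (\<lambda>(i, j). if i = j \<and> i < m then 1 else 0)"
    and "z \<equiv> mat m 1 (\<lambda>(i, j). - Y $$ (i, 0) / Y $$ (m, 0))"
  shows "is_leaf q (Suc m)
    (mstar q (minv P) * four_block_mat (1\<^sub>m m) z (mstar q z) (mstar q z * z) * minv P)
    (mstar q (minv P) * mat (Suc m) 1 (\<lambda>(i, j). if i = m then 1 else 0))
    {minv (P * E * mstar q P + lam \<cdot>\<^sub>m (P * Y * mstar q (P * Y))) | lam. lam \<in> Fq q \<and> lam \<noteq> 0}"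
proof -
  define Q where "Q = minv P"
  define N where "N = four_block_mat (1\<^sub>m m) z (mstar q z) (mstar q z * z)"
  define e where "e = mat (Suc m) 1 (\<lambda>(i, j). if i = m then 1 else (0 :: 'a))"
  define a where "a = Y $$ (m, 0) * hconj q (Y $$ (m, 0))"
  have z: "z \<in> carrier_mat m 1" by (simp add: z_def)
  have Q: "Q \<in> carrier_mat (Suc m) (Suc m)" "invertible_mat Q"
    using minv_inverts_mat[OF P] P(1) by (auto simp: Q_def intro: invertible_matI)
  have a: "a \<in> Fq q" "a \<noteq> 0"
    using mult_hconj_self_in_Fq yn by (auto simp: a_def)
  have member: "minv (P * E * mstar q P + lam \<cdot>\<^sub>m (P * Y * mstar q (P * Y)))
      = mstar q Q * (N + inverse (lam * a) \<cdot>\<^sub>m (e * mstar q e)) * Q" if "lam \<noteq> 0" for lam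
    using minv_rank_one_update[OF P Y yn that] bordered_identity_add_corner[OF z]
    by (simp add: E_def z_def Q_def N_def e_def a_def mult.assoc)
  have "{minv (P * E * mstar q P + lam \<cdot>\<^sub>m (P * Y * mstar q (P * Y))) | lam. lam \<in> Fq q \<and> lam \<noteq> 0}
      = {mstar q Q * (N + inverse (lam * a) \<cdot>\<^sub>m (e * mstar q e)) * Q | lam. lam \<in> Fq q \<and> lam \<noteq> 0}"
    using member by (simp add: setcompr_eq_image)
  also have "\<dots> = {mstar q Q * (N + mu \<cdot>\<^sub>m (e * mstar q e)) * Q | mu. mu \<in> Fq q \<and> mu \<noteq> 0}"
    by (rule image_inverse_scaled_Fq[OF a])
  also have "\<dots> = (\<lambda>X. mstar q Q * X * Q) ` leaf q N e"
    unfolding leaf_def by (simp add: setcompr_eq_image image_image)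
  finally have leaf_eq: "{minv (P * E * mstar q P + lam \<cdot>\<^sub>m (P * Y * mstar q (P * Y))) | lam. lam \<in> Fq q \<and> lam \<noteq> 0}
      = (\<lambda>X. mstar q Q * X * Q) ` leaf q N e" .
  have "is_leaf q (Suc m) (mstar q Q * N * Q) (mstar q Q * e)
      {minv (P * E * mstar q P + lam \<cdot>\<^sub>m (P * Y * mstar q (P * Y))) | lam. lam \<in> Fq q \<and> lam \<noteq> 0}"
    unfolding leaf_eq by (rule is_leaf_congruence[OF Q is_leaf_bordered_identity[OF z, folded N_def e_def]])
  then show ?thesis by (simp only: Q_def N_def e_def)
qed

lemma mstar_minv_hermitian:
  assumes D: "D \<in> carrier_mat m m" "invertible_mat D" and "hermitian q (D :: 'a mat)"
  shows "mstar q (minv D) = minv D"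
  using mstar_minv(2)[OF D] assms(3) minv_inverts_mat(1)[OF D]
  by (intro minv_eqI[OF D(1), symmetric]) (simp_all add: hermitian_def)

lemma bordered_mult_inverse:
  fixes D w :: "'a mat" and mu :: 'a
  assumes D: "D \<in> carrier_mat m m" "invertible_mat D" and herm: "hermitian q D"
    and w: "w \<in> carrier_mat m 1"
  defines "M \<equiv> four_block_mat (mat 1 1 (\<lambda>_. mu)) (mstar q w) w D"
    and "s \<equiv> (mstar q w * minv D * w) $$ (0, 0)"
    and "u \<equiv> mat 1 1 (\<lambda>_. - 1) @\<^sub>r (minv D * w)"
  assumes mu: "mu \<noteq> s"
  shows "M * (four_block_mat (0\<^sub>m 1 1) (0\<^sub>m 1 m) (0\<^sub>m m 1) (minv D) + inverse (mu - s) \<cdot>\<^sub>m (u * mstar q u))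
    = 1\<^sub>m (Suc m)"
proof -
  define v where "v = minv D * w"
  define B where "B = four_block_mat (0\<^sub>m 1 1) (0\<^sub>m 1 m) (0\<^sub>m m 1) (minv D)"
  note Di = minv_inverts_mat[OF D]
  have v: "v \<in> carrier_mat m 1" using Di(1) w by (simp add: v_def)
  have M: "M \<in> carrier_mat (Suc m) (Suc m)"
    using four_block_carrier_mat[of "mat 1 1 (\<lambda>_. mu)" 1 1 D m m] D by (simp add: M_def)
  have u: "u \<in> carrier_mat (Suc m) 1"
    using carrier_append_rows[of "mat 1 1 (\<lambda>_. - 1)" 1 1 v m] v by (simp add: u_def v_def)
  have B: "B \<in> carrier_mat (Suc m) (Suc m)"
    using four_block_carrier_mat[of "0\<^sub>m 1 1" 1 1 "minv D" m m] Di(1) by (simp add: B_def)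
  have uu: "u * mstar q u \<in> carrier_mat (Suc m) (Suc m)" using u by simp
  have vstar: "mstar q v = mstar q w * minv D"
    using mstar_mult[OF Di(1) w] mstar_minv_hermitian[OF D herm] by (simp add: v_def)
  have "M * (B + inverse (mu - s) \<cdot>\<^sub>m (u * mstar q u)) = M * B + inverse (mu - s) \<cdot>\<^sub>m (M * u * mstar q u)"
    using mult_add_distrib_mat[OF M B smult_carrier_mat[OF uu]]
      mult_smult_distrib[OF M uu] assoc_mult_mat[OF M u mstar_carrier_mat[OF u]] by simp
  also have "M * B = four_block_mat (0\<^sub>m 1 1) (mstar q w * minv D) (0\<^sub>m m 1) (1\<^sub>m m)"
    using bordered_mult_block_diag[OF mstar_carrier_mat[OF w] w D(1) Di(1)] Di(2)
    by (simp add: M_def B_def)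
  also have "M * u = mat 1 1 (\<lambda>_. s - mu) @\<^sub>r 0\<^sub>m m 1"
    unfolding M_def u_def s_def by (rule bordered_mult_kernel_col[OF mstar_carrier_mat[OF w] w D])
  also have "four_block_mat (0\<^sub>m 1 1) (mstar q w * minv D) (0\<^sub>m m 1) (1\<^sub>m m)
      + inverse (mu - s) \<cdot>\<^sub>m ((mat 1 1 (\<lambda>_. s - mu) @\<^sub>r 0\<^sub>m m 1) * mstar q u) = 1\<^sub>m (Suc m)"
  proof -
    have scale: "inverse (mu - s) * ((s - mu) * x) = - x" for x
      using mu by (simp add: field_simps)
    show ?thesis
      by (intro eq_matI) (use mu w v Di(1) vstar[symmetric] in \<open>auto simp: append_rows_def u_def
          v_def[symmetric] scalar_prod_def hconj_uminus scale\<close>)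
  qed
  finally show ?thesis unfolding B_def .
qed

lemma bordered_hermitian_inverse:
  fixes D w :: "'a mat" and mu :: 'a
  assumes D: "D \<in> carrier_mat m m" "invertible_mat D" and herm: "hermitian q D"
    and w: "w \<in> carrier_mat m 1"
  defines "M \<equiv> four_block_mat (mat 1 1 (\<lambda>_. mu)) (mstar q w) w D"
    and "s \<equiv> (mstar q w * minv D * w) $$ (0, 0)"
    and "u \<equiv> mat 1 1 (\<lambda>_. - 1) @\<^sub>r (minv D * w)"
  shows "(invertible_mat M \<longleftrightarrow> mu \<noteq> s) \<and>
    (mu \<noteq> s \<longrightarrow> minv M = four_block_mat (0\<^sub>m 1 1) (0\<^sub>m 1 m) (0\<^sub>m m 1) (minv D)
      + inverse (mu - s) \<cdot>\<^sub>m (u * mstar q u))"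
proof (cases "mu = s")
  case True
  note Di = minv_inverts_mat[OF D]
  have M: "M \<in> carrier_mat (Suc m) (Suc m)"
    using four_block_carrier_mat[of "mat 1 1 (\<lambda>_. mu)" 1 1 D m m] D by (simp add: M_def)
  have u: "u \<in> carrier_mat (Suc m) 1"
    using carrier_append_rows[of "mat 1 1 (\<lambda>_. - 1)" 1 1 "minv D * w" m] Di(1) w by (simp add: u_def)
  have "M * u = mat 1 1 (\<lambda>_. 0) @\<^sub>r 0\<^sub>m m 1"
    unfolding M_def u_def using bordered_mult_kernel_col[OF mstar_carrier_mat[OF w] w D] True
    by (simp add: s_def)
  then have "M * u = 0\<^sub>m (Suc m) 1"
    by (intro eq_matI) (auto simp: append_rows_def)
  moreover have "u $$ (0, 0) = - 1"
    by (simp add: u_def append_rows_def)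
  then have "u \<noteq> 0\<^sub>m (Suc m) 1" by auto
  ultimately have "det M = 0" by (rule det_eq_0_if_mult_col_eq_0[OF M u])
  with True show ?thesis using det_neq_0_if_invertible[OF M] by blast
next
  case False
  have M: "M \<in> carrier_mat (Suc m) (Suc m)"
    using four_block_carrier_mat[of "mat 1 1 (\<lambda>_. mu)" 1 1 D m m] D by (simp add: M_def)
  have X: "four_block_mat (0\<^sub>m 1 1) (0\<^sub>m 1 m) (0\<^sub>m m 1) (minv D) + inverse (mu - s) \<cdot>\<^sub>m (u * mstar q u)
      \<in> carrier_mat (Suc m) (Suc m)"
  proof -
    have "u \<in> carrier_mat (Suc m) 1"
      using carrier_append_rows[of "mat 1 1 (\<lambda>_. - 1)" 1 1 "minv D * w" m] minv_inverts_mat(1)[OF D] w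
      by (simp add: u_def)
    moreover have "four_block_mat (0\<^sub>m 1 1) (0\<^sub>m 1 m) (0\<^sub>m m 1) (minv D) \<in> carrier_mat (Suc m) (Suc m)"
      using four_block_carrier_mat[of "0\<^sub>m 1 1" 1 1 "minv D" m m] minv_inverts_mat(1)[OF D] by simp
    ultimately show ?thesis by simp
  qed
  from M X bordered_mult_inverse[OF D herm w False[unfolded s_def]] show ?thesis
    using False by (auto simp: M_def s_def u_def intro: invertible_matI minv_eqI)
qed

end

theorem lemma3p1:
  fixes q n :: nat and P Y D w :: "'a::{field,finite} mat" and mu :: 'a
  assumes card: "card (UNIV :: 'a set) = q ^ 2"
    and n2: "n \<ge> 2"
  shows
   "(P \<in> carrier_mat n n \<longrightarrow> invertible_mat P \<longrightarrow>
       Y \<in> carrier_mat n 1 \<longrightarrow> Y $$ (n - 1, 0) \<noteq> 0 \<longrightarrow>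
       (let A = P * mat n n (\<lambda>(i, j). if i = j \<and> i < n - 1 then 1 else 0) * mstar q P;
            x = P * Y;
            yn = Y $$ (n - 1, 0);
            z = mat (n - 1) 1 (\<lambda>(i, j). - (Y $$ (i, 0)) / yn);
            N = mstar q (minv P) * four_block_mat (1\<^sub>m (n - 1)) z (mstar q z) (mstar q z * z)
                  * minv P;
            v = mstar q (minv P) * mat n 1 (\<lambda>(i, j). if i = n - 1 then 1 else 0)
        in (\<forall>lam \<in> Fq q. lam \<noteq> 0 \<longrightarrow>
              minv (A + lam \<cdot>\<^sub>m (x * mstar q x)) =
                mstar q (minv P) *
                four_block_mat (1\<^sub>m (n - 1)) z (mstar q z)
                  (mstar q z * z + inverse (lam * yn * hconj q yn) \<cdot>\<^sub>m 1\<^sub>m 1)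
                * minv P)
           \<and> (q \<ge> 3 \<longrightarrow>
                is_leaf q n N v {minv (A + lam \<cdot>\<^sub>m (x * mstar q x)) | lam. lam \<in> Fq q \<and> lam \<noteq> 0})))
  \<and> (D \<in> carrier_mat (n - 1) (n - 1) \<longrightarrow> invertible_mat D \<longrightarrow> hermitian q D \<longrightarrow>
       w \<in> carrier_mat (n - 1) 1 \<longrightarrow> mu \<in> Fq q \<longrightarrow>
       (let M = four_block_mat (mat 1 1 (\<lambda>_. mu)) (mstar q w) w D;
            s = (mstar q w * minv D * w) $$ (0, 0);
            u = mat 1 1 (\<lambda>_. - 1) @\<^sub>r (minv D * w)
        in (invertible_mat M \<longleftrightarrow> mu \<noteq> s) \<and>
           (mu \<noteq> s \<longrightarrow>
              minv M = four_block_mat (0\<^sub>m 1 1) (0\<^sub>m 1 (n - 1)) (0\<^sub>m (n - 1) 1) (minv D)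
                       + inverse (mu - s) \<cdot>\<^sub>m (u * mstar q u))))"
proof -
  obtain m where n: "n = Suc m"
    using n2 by (cases n) auto
  show ?thesis
    unfolding Let_def n diff_Suc_1
    using minv_rank_one_update[OF card, of P m Y] is_leaf_minv_rank_one_updates[OF card, of P m Y]
      bordered_hermitian_inverse[OF card, of D m w]
    by blast
qed

end
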